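(* Fix $x>0$, $t>0$, and $v\in(0,1]$, and let $a(y)=1-ve^{-y}$ for $y\in\mathbb{R}$. Then the function $y\mapsto a(x-y)\exp(-vte^{-y})$ is unimodal on $\mathbb{R}$ with maximum at $$y^*=\log\left(-vt+\sqrt{v^2t^2+4te^{x}}\right)-\log 2.$$ Moreover, for any fixed $A>0$, the function $y\mapsto a(y)[1+A\,a(x-y)]$ is unimodal on $\mathbb{R}$ with maximum at $y^*=[x+\log(1+A^{-1})]/2$. *)

theory Defs
  imports Complex_Main
begin

definition unimodal_max_at :: "(real \<Rightarrow> real) \<Rightarrow> real \<Rightarrow> bool" where
  "unimodal_max_at f m \<longleftrightarrow>
     (\<forall>a b. a < b \<and> b \<le> m \<longrightarrow> f a < f b) \<and>
     (\<forall>a b. m \<le> a \<and> a < b \<longrightarrow> f b < f a)"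

end

theory Submission
  imports Defs
begin

text \<open>Both functions are smooth, and each derivative is a positive function times
  exp m - exp y (in the second case exp (2 m) - exp (2 y)), where m is the claimed maximiser.
  For the first function this is because exp m is the positive root of s^2 + v t s = t exp x;
  for the second, because exp (2 m) = (1 + 1/A) exp x.\<close>

lemma unimodal_max_at_if_deriv_sgn:
  fixes f f' :: "real \<Rightarrow> real"
  assumes deriv: "\<And>y. (f has_real_derivative f' y) (at y)"
    and sgn: "\<And>y. sgn (f' y) = sgn (m - y)"
  shows "unimodal_max_at f m"
proof -
  have cont: "continuous_on S f" for S
    using deriv by (meson DERIV_continuous continuous_at_imp_continuous_on)
  have pos: "f' y > 0" if "y < m" for y
  proof -
    have "sgn (f' y) > 0" using sgn[of y] that by simp
    then show ?thesis by simp
  qed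
  have neg: "f' y < 0" if "y > m" for y
  proof -
    have "sgn (f' y) < 0" using sgn[of y] that by simp
    then show ?thesis by simp
  qed
  show ?thesis unfolding unimodal_max_at_def
  proof (intro conjI allI impI)
    fix a b :: real assume "a < b \<and> b \<le> m"
    then show "f a < f b"
      by (intro DERIV_pos_imp_increasing_open[of a b f]) (auto intro!: cont deriv pos)
  next
    fix a b :: real assume "m \<le> a \<and> a < b"
    then show "f b < f a"
      by (intro DERIV_neg_imp_decreasing_open[of a b f]) (auto intro!: cont deriv neg)
  qed
qed

lemma sgn_pos_mult_exp_diff:
  fixes w m y :: real
  assumes "w > 0"
  shows "sgn (w * (exp m - exp y)) = sgn (m - y)"
  using assms by (cases m y rule: linorder_cases) (auto simp: sgn_mult)

lemma quadratic_positive_root: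
  fixes b c :: real
  assumes "b \<ge> 0" and "c > 0"
  defines "s \<equiv> (- b + sqrt (b\<^sup>2 + 4 * c)) / 2"
  shows "s > 0" and "s\<^sup>2 + b * s = c"
proof -
  have "b < sqrt (b\<^sup>2 + 4 * c)"
    using assms by (intro real_less_rsqrt) auto
  then show "s > 0" unfolding s_def by simp
  have "(sqrt (b\<^sup>2 + 4 * c))\<^sup>2 = b\<^sup>2 + 4 * c"
    using assms by simp
  then show "s\<^sup>2 + b * s = c"
    unfolding s_def by (simp add: power2_eq_square field_simps)
qed

lemma unimodal_max_at_shifted_times_double_exp:
  fixes x t v :: real
  assumes "t > 0" and "v > 0"
  shows "unimodal_max_at (\<lambda>y. (1 - v * exp (- (x - y))) * exp (- v * t * exp (- y)))
           (ln (- v * t + sqrt (v\<^sup>2 * t\<^sup>2 + 4 * t * exp x)) - ln 2)"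
proof -
  define S where "S = (- (v * t) + sqrt ((v * t)\<^sup>2 + 4 * (t * exp x))) / 2"
  have S_pos: "S > 0" and S_root: "S\<^sup>2 + v * t * S = t * exp x"
    using quadratic_positive_root[of "v * t" "t * exp x"] assms unfolding S_def by auto
  define m where "m = ln S"
  have "ln (- v * t + sqrt (v\<^sup>2 * t\<^sup>2 + 4 * t * exp x)) - ln 2 = m"
  proof -
    have "- v * t + sqrt (v\<^sup>2 * t\<^sup>2 + 4 * t * exp x) = 2 * S"
      unfolding S_def by (simp add: power_mult_distrib mult.assoc)
    then show ?thesis
      using S_pos unfolding m_def by (simp add: ln_mult)
  qed
  moreover have "unimodal_max_at (\<lambda>y. (1 - v * exp (- (x - y))) * exp (- v * t * exp (- y))) m"
  proof (rule unimodal_max_at_if_deriv_sgn)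
    define w where "w y = v * exp (- v * t * exp (- y)) * exp (- x) * exp (- y) * (exp y + v * t + S)"
      for y
    fix y
    have "((\<lambda>y. (1 - v * exp (- (x - y))) * exp (- v * t * exp (- y))) has_real_derivative
        v * exp (- v * t * exp (- y)) * exp (- x) * exp (- y) * (t * exp x - exp y ^ 2 - v * t * exp y))
        (at y)"
      apply (rule derivative_eq_intros refl | simp)+
      apply (simp add: algebra_simps exp_diff exp_minus power2_eq_square field_simps)
      done
    moreover have "t * exp x - exp y ^ 2 - v * t * exp y = (exp y + v * t + S) * (exp m - exp y)"
      using S_root S_pos unfolding m_def by (simp add: algebra_simps power2_eq_square)
    ultimately show "((\<lambda>y. (1 - v * exp (- (x - y))) * exp (- v * t * exp (- y)))
        has_real_derivative w y * (exp m - exp y)) (at y)"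
      unfolding w_def by (simp add: mult.assoc)
    have "w y > 0"
      using assms S_pos unfolding w_def by (simp add: add_pos_pos)
    then show "sgn (w y * (exp m - exp y)) = sgn (m - y)"
      by (rule sgn_pos_mult_exp_diff)
  qed
  ultimately show ?thesis by simp
qed

lemma unimodal_max_at_product_with_reflection:
  fixes x v A :: real
  assumes "v > 0" and "A > 0"
  shows "unimodal_max_at (\<lambda>y. (1 - v * exp (- y)) * (1 + A * (1 - v * exp (- (x - y)))))
           ((x + ln (1 + 1 / A)) / 2)"
proof (rule unimodal_max_at_if_deriv_sgn)
  define m where "m = (x + ln (1 + 1 / A)) / 2"
  define w where "w y = A * v * exp (- y) * exp (- x)" for y
  fix y
  have "exp (2 * m) = exp x * (1 + 1 / A)"
  proof -
    have "2 * m = x + ln (1 + 1 / A)"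
      unfolding m_def by simp
    then show ?thesis
      using assms by (simp add: exp_add add_pos_pos)
  qed
  then have "(1 + A) * exp x - A * exp (2 * y) = A * (exp (2 * m) - exp (2 * y))"
    using assms by (simp add: field_simps)
  moreover have "((\<lambda>y. (1 - v * exp (- y)) * (1 + A * (1 - v * exp (- (x - y)))))
      has_real_derivative v * exp (- y) * exp (- x) * ((1 + A) * exp x - A * exp (2 * y))) (at y)"
    apply (rule derivative_eq_intros refl | simp)+
    apply (simp add: algebra_simps exp_diff exp_minus exp_add mult_exp_exp[symmetric] field_simps)
    apply (simp add: mult_exp_exp)
    done
  ultimately show "((\<lambda>y. (1 - v * exp (- y)) * (1 + A * (1 - v * exp (- (x - y)))))
      has_real_derivative w y * (exp (2 * m) - exp (2 * y))) (at y)"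
    unfolding w_def by (simp add: ac_simps)
  have "w y > 0"
    using assms unfolding w_def by simp
  then have "sgn (w y * (exp (2 * m) - exp (2 * y))) = sgn (2 * (m - y))"
    unfolding right_diff_distrib[of 2] by (rule sgn_pos_mult_exp_diff)
  then show "sgn (w y * (exp (2 * m) - exp (2 * y))) = sgn ((x + ln (1 + 1 / A)) / 2 - y)"
    by (simp only: sgn_mult m_def[symmetric]) simp
qed

theorem lemma1:
  fixes x t v :: real and a :: "real \<Rightarrow> real"
  assumes "x > 0" and "t > 0" and "0 < v" and "v \<le> 1"
    and "\<And>y. a y = 1 - v * exp (- y)"
  shows "unimodal_max_at (\<lambda>y. a (x - y) * exp (- v * t * exp (- y)))
           (ln (- v * t + sqrt (v\<^sup>2 * t\<^sup>2 + 4 * t * exp x)) - ln 2)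
       \<and> (\<forall>A::real. A > 0 \<longrightarrow>
           unimodal_max_at (\<lambda>y. a y * (1 + A * a (x - y)))
             ((x + ln (1 + 1 / A)) / 2))"
  using unimodal_max_at_shifted_times_double_exp[OF assms(2,3), of x]
    unimodal_max_at_product_with_reflection[OF assms(3)]
  by (simp add: assms(5))

end
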